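(* Let $f \in \mathbb{Q}[X,Y]$ be square-free with $d := \deg_Y f \ge 2$ and with leading coefficient of $f$ with respect to $Y$ a nonzero rational constant. Let $\mathrm{Sr}_k(X,Y)=\sum_{j=0}^k \mathrm{sr}_{k,j}(X)Y^j$ ($0\le k\le d-1$) be the subresultant polynomials of $f$ and $\partial_Y f$ with respect to $Y$, and let $\Gamma_1,\dots,\Gamma_{d-1}\in\mathbb{Q}[X]$ be defined as in the context. Then the curve $\mathcal{C}(f)=\{(\alpha,\beta)\in\mathbb{R}^2 : f(\alpha,\beta)=0\}$ is in generic position for the $x$-direction if and only if for every $k\in\{1,\dots,d-1\}$ and every $i\in\{0,\dots,k-1\}$ the polynomial $$k(k-i)\,\mathrm{sr}_{k,i}(X)\,\mathrm{sr}_{k,k}(X)-(i+1)\,\mathrm{sr}_{k,k-1}(X)\,\mathrm{sr}_{k,i+1}(X)$$ is divisible by $\Gamma_k(X)$ in $\mathbb{Q}[X]$.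
   Context: Subresultants: let $\mathbb{A}$ be an integral domain, $P=\sum_{i=0}^p a_iT^i$, $Q=\sum_{i=0}^q b_iT^i\in\mathbb{A}[T]$ with $a_pb_q\neq 0$ and $p>q$. For $0\le k\le q$, let $M_k(P,Q)$ be the $(p+q-2k)\times(p+q-k)$ matrix whose rows are the coefficient vectors, in the basis $1,T,\dots,T^{p+q-k-1}$ (columns indexed $0,\dots,p+q-k-1$), of $P,TP,\dots,T^{q-k-1}P$ followed by $Q,TQ,\dots,T^{p-k-1}Q$. For $0\le j\le k$, $\mathrm{sr}_{k,j}$ is the determinant of the square matrix formed by column $j$ followed by the last $p+q-2k-1$ columns (indices $k+1,\dots,p+q-k-1$) of $M_k(P,Q)$. The $k$-th subresultant polynomial is $\mathrm{Sr}_k=\sum_{j=0}^k\mathrm{sr}_{k,j}T^j$, and $\mathrm{sr}_{k,k}$ is its principal coefficient; $\mathrm{Sr}_0=\mathrm{sr}_{0,0}$ is the resultant. Here $\mathbb{A}=\mathbb{Q}[X]$, $T=Y$, $P=f$, $Q=\partial_Y f$. Define $\Phi_0(X)=\mathrm{sr}_{0,0}(X)/\gcd(\mathrm{sr}_{0,0}(X),\mathrm{sr}_{0,0}'(X))$ and for $i=1,\dots,d-1$: $\Phi_i=\gcd(\Phi_{i-1},\mathrm{sr}_{i,i})$, $\Gamma_i=\Phi_{i-1}/\Phi_i$ (gcds in $\mathbb{Q}[X]$, up to nonzero constants). Generic position for the $x$-direction: for every $\alpha\in\mathbb{C}$ there is at most one $\beta\in\mathbb{C}$ with $f(\alpha,\beta)=\partial_Yf(\alpha,\beta)=0$,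 and no asymptotic direction of the curve is parallel to the $y$-axis (the latter is automatic when the leading coefficient of $f$ in $Y$ is a nonzero constant). *)

theory Defs
  imports "Jordan_Normal_Form.Determinant"
    "HOL-Computational_Algebra.Polynomial_Factorial"
    "HOL-Computational_Algebra.Squarefree"
    "HOL-Computational_Algebra.Field_as_Ring"
    Complex_Main
begin

text \<open>Bivariate polynomials in Q[X,Y] are represented as rat poly poly:
  polynomials in the outer variable Y whose coefficients are in Q[X].\<close>

text \<open>The (k,j) subresultant coefficient sr_{k,j}(P,Q), p = degree P > q = degree Q:
  determinant of the square matrix of size p+q-2k formed by column j followed by
  columns k+1,...,p+q-k-1 of the matrix M_k(P,Q) whose rows are the coefficient
  vectors of P, TP, ..., T^(q-k-1) P, Q, TQ, ..., T^(p-k-1) Q.\<close>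

definition subres_matrix :: "'a::comm_ring_1 poly \<Rightarrow> 'a poly \<Rightarrow> nat \<Rightarrow> nat \<Rightarrow> nat \<Rightarrow> 'a" where
  "subres_matrix P Q k r c =
     (if r < degree Q - k then (if r \<le> c then coeff P (c - r) else 0)
      else (if r - (degree Q - k) \<le> c then coeff Q (c - (r - (degree Q - k))) else 0))"

definition subres_coeff :: "'a::comm_ring_1 poly \<Rightarrow> 'a poly \<Rightarrow> nat \<Rightarrow> nat \<Rightarrow> 'a" where
  "subres_coeff P Q k j =
     (let n = degree P + degree Q - 2 * k
      in det (mat n n (\<lambda>(r, c). subres_matrix P Q k r (if c = 0 then j else k + c))))"

definition sr :: "rat poly poly \<Rightarrow> nat \<Rightarrow> nat \<Rightarrow> rat poly" where
  "sr f k j = subres_coeff f (pderiv f) k j"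

fun Phi :: "rat poly poly \<Rightarrow> nat \<Rightarrow> rat poly" where
  "Phi f 0 = sr f 0 0 div gcd (sr f 0 0) (pderiv (sr f 0 0))"
| "Phi f (Suc i) = gcd (Phi f i) (sr f (Suc i) (Suc i))"

definition Gamma :: "rat poly poly \<Rightarrow> nat \<Rightarrow> rat poly" where
  "Gamma f i = Phi f (i - 1) div Phi f i"

definition eval2 :: "rat poly poly \<Rightarrow> complex \<Rightarrow> complex \<Rightarrow> complex" where
  "eval2 f a b = poly (map_poly (\<lambda>c. poly (map_poly of_rat c) a) f) b"

text \<open>Generic position for the x-direction: above each complex alpha there is at most one
  complex beta with f(alpha,beta) = df/dY(alpha,beta) = 0.  (The condition on vertical
  asymptotic directions is automatic under the standing hypothesis that the leading
  coefficient of f in Y is a nonzero constant.)\<close>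
definition generic_position_x :: "rat poly poly \<Rightarrow> bool" where
  "generic_position_x f \<longleftrightarrow>
     (\<forall>a b1 b2. eval2 f a b1 = 0 \<and> eval2 (pderiv f) a b1 = 0 \<and>
                eval2 f a b2 = 0 \<and> eval2 (pderiv f) a b2 = 0 \<longrightarrow> b1 = b2)"

end

theory Submission
  imports Defs "Jordan_Normal_Form.Char_Poly"
begin

(* Let f in Q[X][Y] be squarefree of Y-degree d >= 2 with constant leading coefficient, and
   F_a = f(a, Y), G_a = dF_a/dY its specialisations at a complex number a.  Specialisation commutes
   with the subresultant construction, so sr_{k,j}(a) is the subresultant coefficient of F_a, G_a.

   1. Univariate subresultant theory (over any commutative ring, resp. a factorial domain): every
      common divisor of F and G divides Sr_k (Cramer's rule), sr_{g,g} <> 0 for g = deg gcd(F, G),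
      and hence the first Sr_k with nonvanishing principal coefficient is a constant multiple of
      gcd(F, G).
   2. Univariate algebra: a degree-k polynomial is c (T + b)^k iff its coefficients satisfy the
      relations of the theorem; facts about simple roots over C and squarefree parts.
   3. The chain Phi_0, Phi_1, ...: Phi_0 has simple roots, exactly those of the resultant, and the
      roots of Gamma_k are the a with Phi_{k-1}(a) = 0 <> Phi_k(a); at such a, sr_{j,j}(a) = 0 for
      j < k and sr_{k,k}(a) <> 0, so Sr_k(a, Y) is a multiple of gcd(F_a, G_a) of degree k.
   Generic position says gcd(F_a, G_a) has only one root, i.e. Sr_k(a, Y) = c (Y + b)^k at the
   roots of Gamma_k, which is the divisibility condition since Gamma_k has simple roots.
   Conversely the divisibility makes Sr_k(a, Y) = c (Y + b)^k, and all common roots of F_a and G_a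
   are roots of it, hence equal -b. *)

definition subres_poly :: "'a::comm_ring_1 poly \<Rightarrow> 'a poly \<Rightarrow> nat \<Rightarrow> 'a poly" where
  "subres_poly F G k = (\<Sum>j\<le>k. monom (subres_coeff F G k j) j)"

lemma coeff_subres_poly:
  "coeff (subres_poly F G k) i = (if i \<le> k then subres_coeff F G k i else 0)"
  by (simp add: subres_poly_def coeff_sum coeff_monom)

lemma degree_subres_poly_le: "degree (subres_poly F G k) \<le> k"
  by (rule degree_le) (simp add: coeff_subres_poly)

lemma subres_matrix_row:
  fixes F G :: "'a::comm_ring_1 poly"
  assumes k: "k \<le> degree G" and r: "r < degree F + degree G - 2 * k"
  shows "(\<Sum>c<degree F + degree G - k. monom (subres_matrix F G k r c) c) =
    (if r < degree G - k then monom 1 r * F else monom 1 (r - (degree G - k)) * G)"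
proof (rule poly_eqI)
  fix i
  have "coeff (\<Sum>c<degree F + degree G - k. monom (subres_matrix F G k r c) c) i =
     (if i < degree F + degree G - k then subres_matrix F G k r i else 0)"
    by (simp add: coeff_sum coeff_monom)
  then show "coeff (\<Sum>c<degree F + degree G - k. monom (subres_matrix F G k r c) c) i =
    coeff (if r < degree G - k then monom 1 r * F else monom 1 (r - (degree G - k)) * G) i"
    using k r by (auto simp: coeff_monom_mult subres_matrix_def coeff_eq_0)
qed

text \<open>The matrix of \<open>sr\<^sub>k\<^sub>,\<^sub>j\<close> with its first column replaced by the polynomials
  \<open>\<Sum>\<^sub>j\<^sub>\<le>\<^sub>k M\<^sub>k(r, j) T\<^sup>j\<close>; by linearity of the determinant in that column, its determinant is \<open>Sr\<^sub>k\<close>.\<close>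

definition subres_poly_matrix :: "'a::comm_ring_1 poly \<Rightarrow> 'a poly \<Rightarrow> nat \<Rightarrow> 'a poly mat" where
  "subres_poly_matrix F G k =
     mat (degree F + degree G - 2 * k) (degree F + degree G - 2 * k)
       (\<lambda>(r, c). if c = 0 then (\<Sum>j\<le>k. monom (subres_matrix F G k r j) j)
                else [:subres_matrix F G k r (k + c):])"

lemma det_subres_poly_matrix:
  fixes F G :: "'a::comm_ring_1 poly"
  assumes n: "2 * k < degree F + degree G"
  shows "det (subres_poly_matrix F G k) = subres_poly F G k"
proof -
  interpret const: comm_ring_hom "\<lambda>a::'a. [:a:]"
    by unfold_locales (auto simp: pCons_one)
  define n where "n = degree F + degree G - 2 * k"
  define M where "M = subres_matrix F G k"
  define A where "A = subres_poly_matrix F G k"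
  define B where "B = (\<lambda>j. mat n n (\<lambda>(r, c). [:M r (if c = 0 then j else k + c):]))"
  have n0: "0 < n" using n unfolding n_def by simp
  have cof: "cofactor A i 0 = cofactor (B j) i 0" for i j
    unfolding cofactor_def A_def B_def subres_poly_matrix_def n_def M_def
    by (rule arg_cong[of _ _ "\<lambda>m. (-1)^(i+0) * det m"], rule eq_matI) (auto simp: mat_delete_def)
  have detB: "det (B j) = [:subres_coeff F G k j:]" for j
  proof -
    have "B j = map_mat (\<lambda>a. [:a:]) (mat n n (\<lambda>(r, c). M r (if c = 0 then j else k + c)))"
      unfolding B_def by (rule eq_matI) auto
    then show ?thesis unfolding subres_coeff_def Let_def M_def n_def by simp
  qed
  have "det A = (\<Sum>i<n. A $$ (i, 0) * cofactor A i 0)"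
    by (rule laplace_expansion_column) (use n0 in \<open>auto simp: A_def n_def subres_poly_matrix_def\<close>)
  also have "\<dots> = (\<Sum>i<n. \<Sum>j\<le>k. monom 1 j * (B j $$ (i, 0) * cofactor (B j) i 0))"
  proof (intro sum.cong refl)
    fix i assume "i \<in> {..<n}"
    then have "A $$ (i, 0) = (\<Sum>j\<le>k. monom 1 j * B j $$ (i, 0))"
      using n0 by (simp add: A_def B_def subres_poly_matrix_def M_def n_def smult_monom)
    then show "A $$ (i, 0) * cofactor A i 0 = (\<Sum>j\<le>k. monom 1 j * (B j $$ (i, 0) * cofactor (B j) i 0))"
      by (simp add: sum_distrib_right mult.assoc cof[symmetric])
  qed
  also have "\<dots> = (\<Sum>j\<le>k. monom 1 j * (\<Sum>i<n. B j $$ (i, 0) * cofactor (B j) i 0))"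
    by (subst sum.swap) (simp add: sum_distrib_left B_def n0)
  also have "\<dots> = (\<Sum>j\<le>k. monom 1 j * det (B j))"
    by (intro sum.cong refl, subst laplace_expansion_column[of _ n 0]) (auto simp: B_def n0)
  also have "\<dots> = subres_poly F G k"
    by (simp add: detB subres_poly_def smult_monom mult.commute)
  finally show ?thesis unfolding A_def .
qed

text \<open>Adding \<open>T\<^sup>k\<^sup>+\<^sup>c\<close> times column \<open>c\<close> to the first column turns each row into the row polynomial
  \<open>T\<^sup>r F\<close> or \<open>T\<^sup>r\<^sup>' G\<close>.\<close>

lemma subres_poly_matrix_mult_vec:
  fixes F G :: "'a::comm_ring_1 poly" and k :: nat
  defines "n \<equiv> degree F + degree G - 2 * k"
  assumes k: "k \<le> degree G" and r: "r < n"
  shows "(subres_poly_matrix F G k *\<^sub>v vec n (\<lambda>c. if c = 0 then 1 else monom 1 (k + c))) $ r =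
    (if r < degree G - k then monom 1 r * F else monom 1 (r - (degree G - k)) * G)"
proof -
  define M where "M = subres_matrix F G k"
  have n0: "0 < n" using r by simp
  have "(subres_poly_matrix F G k *\<^sub>v vec n (\<lambda>c. if c = 0 then 1 else monom 1 (k + c))) $ r
      = (\<Sum>j\<le>k. monom (M r j) j) + (\<Sum>c\<in>{1..<n}. monom (M r (k + c)) (k + c))"
    using r n0 by (simp add: subres_poly_matrix_def scalar_prod_def M_def n_def
        lessThan_atLeast0 sum.atLeast_Suc_lessThan smult_monom)
  also have "(\<Sum>c\<in>{1..<n}. monom (M r (k + c)) (k + c)) = (\<Sum>c\<in>{k+1..<k+n}. monom (M r c) c)"
    by (rule sum.reindex_bij_witness[of _ "\<lambda>c. c - k" "\<lambda>c. k + c"]) auto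
  also have "(\<Sum>j\<le>k. monom (M r j) j) + \<dots> = (\<Sum>c\<in>{..k} \<union> {k+1..<k+n}. monom (M r c) c)"
    by (rule sum.union_disjoint[symmetric]) auto
  also have "{..k} \<union> {k+1..<k+n} = {..<degree F + degree G - k}"
    using k r unfolding n_def by auto
  finally show ?thesis
    using subres_matrix_row[OF k r[unfolded n_def]] unfolding M_def by simp
qed

lemma dvd_det_if_dvd_mult_vec:
  fixes A :: "'a::comm_ring_1 mat"
  assumes A: "A \<in> carrier_mat n n" and x: "x \<in> carrier_vec n" and n0: "0 < n" and x0: "x $ 0 = 1"
    and dvd: "\<And>r. r < n \<Longrightarrow> D dvd (A *\<^sub>v x) $ r"
  shows "D dvd det A"
proof -
  have "det A = ((adj_mat A * A) *\<^sub>v x) $ 0"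
    using A x n0 x0 by (simp add: adj_mat(3)[OF A])
  also have "\<dots> = (adj_mat A *\<^sub>v (A *\<^sub>v x)) $ 0"
    using adj_mat(1)[OF A] A x by simp
  also have "\<dots> = (\<Sum>r<n. adj_mat A $$ (0, r) * (A *\<^sub>v x) $ r)"
    using adj_mat(1)[OF A] A x n0 by (simp add: scalar_prod_def lessThan_atLeast0)
  also have "D dvd \<dots>"
    by (intro dvd_sum dvd_mult dvd) simp
  finally show ?thesis .
qed

lemma subres_poly_dvd:
  fixes F G D :: "'a::comm_ring_1 poly"
  assumes k: "k \<le> degree G" and GF: "degree G < degree F" and DF: "D dvd F" and DG: "D dvd G"
  shows "D dvd subres_poly F G k"
proof -
  define n where "n = degree F + degree G - 2 * k"
  have n0: "0 < n" using k GF unfolding n_def by simp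
  have "D dvd det (subres_poly_matrix F G k)"
  proof (rule dvd_det_if_dvd_mult_vec)
    show "subres_poly_matrix F G k \<in> carrier_mat n n"
      by (simp add: subres_poly_matrix_def n_def)
    show "D dvd (subres_poly_matrix F G k *\<^sub>v vec n (\<lambda>c. if c = 0 then 1 else monom 1 (k + c))) $ r"
      if "r < n" for r
      using subres_poly_matrix_mult_vec[OF k that[unfolded n_def]] DF DG by (simp add: n_def)
  qed (use n0 in auto)
  then show ?thesis
    using k GF by (simp add: det_subres_poly_matrix)
qed

lemma subres_rows_combination:
  fixes F G :: "'a::comm_ring_1 poly" and v :: "nat \<Rightarrow> 'a"
  assumes g: "g \<le> degree G" and GF: "degree G < degree F"
  shows "(\<Sum>r<degree F + degree G - 2 * g.
            smult (v r) (\<Sum>c<degree F + degree G - g. monom (subres_matrix F G g r c) c)) =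
    (\<Sum>r<degree G - g. monom (v r) r) * F + (\<Sum>r<degree F - g. monom (v (degree G - g + r)) r) * G"
proof -
  define p where "p = degree F"
  define q where "q = degree G"
  define n where "n = p + q - 2 * g"
  have row: "(\<Sum>c<p + q - g. monom (subres_matrix F G g r c) c) =
      (if r < q - g then monom 1 r * F else monom 1 (r - (q - g)) * G)" if "r < n" for r
    using subres_matrix_row[of g G r F] that g unfolding n_def p_def q_def by auto
  have split: "{..<n} = {..<q - g} \<union> {q - g..<n}"
    using g GF unfolding n_def p_def q_def by auto
  have "(\<Sum>r<n. smult (v r) (\<Sum>c<p + q - g. monom (subres_matrix F G g r c) c)) =
      (\<Sum>r<n. smult (v r) (if r < q - g then monom 1 r * F else monom 1 (r - (q - g)) * G))"
    by (intro sum.cong) (simp_all add: row)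
  also have "\<dots> = (\<Sum>r<q - g. smult (v r) (monom 1 r * F)) +
      (\<Sum>r\<in>{q - g..<n}. smult (v r) (monom 1 (r - (q - g)) * G))"
    unfolding split by (subst sum.union_disjoint) (auto intro!: sum.cong)
  also have "(\<Sum>r\<in>{q - g..<n}. smult (v r) (monom 1 (r - (q - g)) * G)) =
      (\<Sum>r<p - g. smult (v (q - g + r)) (monom 1 r * G))"
    by (rule sum.reindex_bij_witness[of _ "\<lambda>r. q - g + r" "\<lambda>r. r - (q - g)"])
      (use g GF in \<open>auto simp: n_def p_def q_def\<close>)
  finally show ?thesis
    by (simp add: n_def p_def q_def sum_distrib_right smult_monom flip: mult_smult_left)
qed

lemma subres_coeff_zero_imp_row_dependence:
  fixes F G :: "'a::idom poly" and g :: nat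
  defines "n \<equiv> degree F + degree G - 2 * g"
  assumes sr0: "subres_coeff F G g g = 0"
  obtains v :: "nat \<Rightarrow> 'a" where "\<exists>r<n. v r \<noteq> 0"
    and "\<And>c. c < n \<Longrightarrow> (\<Sum>r<n. v r * subres_matrix F G g r (g + c)) = 0"
proof -
  define Mp where "Mp = mat n n (\<lambda>(r, c). subres_matrix F G g r (if c = 0 then g else g + c))"
  have Mp: "Mp \<in> carrier_mat n n" unfolding Mp_def by auto
  have "det (transpose_mat Mp) = 0"
    using sr0 det_transpose[OF Mp] unfolding subres_coeff_def Let_def Mp_def n_def by simp
  then obtain v where v: "v \<in> carrier_vec n" "v \<noteq> 0\<^sub>v n" "transpose_mat Mp *\<^sub>v v = 0\<^sub>v n"
    using det_0_iff_vec_prod_zero[of "transpose_mat Mp" n] Mp by auto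
  have "(\<Sum>r<n. v $ r * subres_matrix F G g r (g + c)) = 0" if c: "c < n" for c
  proof -
    have "(\<Sum>r<n. v $ r * subres_matrix F G g r (g + c)) = (transpose_mat Mp *\<^sub>v v) $ c"
      using c v(1) Mp by (auto simp: scalar_prod_def lessThan_atLeast0 Mp_def mult.commute intro!: sum.cong)
    then show ?thesis using v(3) c by simp
  qed
  moreover have "\<exists>r<n. v $ r \<noteq> 0" using v(1,2) by (auto simp: vec_eq_iff)
  ultimately show ?thesis using that[of "\<lambda>r. v $ r"] by blast
qed

lemma subres_coeff_zero_imp_combination:
  fixes F G :: "'a::idom poly"
  assumes g: "g \<le> degree G" and GF: "degree G < degree F" and sr0: "subres_coeff F G g g = 0"
  obtains U V where "U \<noteq> 0 \<or> V \<noteq> 0" "U = 0 \<or> degree U < degree G - g"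
    "\<And>i. g \<le> i \<Longrightarrow> coeff (U * F + V * G) i = 0"
proof -
  define p where "p = degree F"
  define q where "q = degree G"
  define n where "n = p + q - 2 * g"
  obtain v where nonzero: "\<exists>r<n. v r \<noteq> 0"
    and kernel: "\<And>c. c < n \<Longrightarrow> (\<Sum>r<n. v r * subres_matrix F G g r (g + c)) = 0"
    using subres_coeff_zero_imp_row_dependence[OF sr0] unfolding n_def p_def q_def by blast
  define U where "U = (\<Sum>r<q - g. monom (v r) r)"
  define V where "V = (\<Sum>r<p - g. monom (v (q - g + r)) r)"
  have coeff_U: "coeff U r = (if r < q - g then v r else 0)" for r
    by (simp add: U_def coeff_sum)
  have coeff_V: "coeff V r = (if r < p - g then v (q - g + r) else 0)" for r
    by (simp add: V_def coeff_sum)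
  have UV: "U * F + V * G = (\<Sum>r<n. smult (v r) (\<Sum>c<p + q - g. monom (subres_matrix F G g r c) c))"
    using subres_rows_combination[OF g GF, of v] by (simp add: U_def V_def n_def p_def q_def)
  have "coeff (U * F + V * G) i = 0" if i: "g \<le> i" for i
  proof (cases "i < p + q - g")
    case True
    then have "i - g < n" using i g unfolding n_def p_def q_def by auto
    then show ?thesis
      using kernel[of "i - g"] True i by (simp add: UV coeff_sum)
  qed (simp add: UV coeff_sum)
  moreover have "U \<noteq> 0 \<or> V \<noteq> 0"
  proof -
    obtain r where r: "r < n" "v r \<noteq> 0" using nonzero by blast
    show ?thesis
    proof (cases "r < q - g")
      case True
      then show ?thesis using r coeff_U[of r] by auto
    next
      case False
      then have "r - (q - g) < p - g" "q - g + (r - (q - g)) = r"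
        using r(1) g unfolding n_def q_def by auto
      then show ?thesis using r(2) coeff_V[of "r - (q - g)"] by auto
    qed
  qed
  moreover have "U = 0 \<or> degree U < q - g"
    using coeff_U by (metis degree_0 leading_coeff_0_iff not_less_iff_gr_or_eq)
  ultimately show ?thesis using that unfolding q_def by blast
qed

text \<open>The principal subresultant coefficient of index \<open>deg gcd(F, G)\<close> does not vanish: a nontrivial
  combination \<open>U F + V G\<close> of degree below \<open>deg gcd(F, G)\<close> must be zero, and then \<open>G / gcd(F, G)\<close>
  divides \<open>U\<close>, which is impossible for degree reasons.\<close>

lemma subres_coeff_gcd_degree_nonzero:
  fixes F G :: "'a::{factorial_ring_gcd,semiring_gcd_mult_normalize} poly"
  assumes GF: "degree G < degree F" and G0: "G \<noteq> 0"
  shows "subres_coeff F G (degree (gcd F G)) (degree (gcd F G)) \<noteq> 0"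
proof
  define D where "D = gcd F G"
  define g where "g = degree D"
  define F1 where "F1 = F div D"
  define G1 where "G1 = G div D"
  have D0: "D \<noteq> 0" using G0 by (simp add: D_def)
  have F1: "F = D * F1" and G1: "G = D * G1" by (simp_all add: D_def F1_def G1_def)
  have cop: "coprime F1 G1" using G0 by (simp add: F1_def G1_def D_def div_gcd_coprime)
  have gG: "g \<le> degree G" using G0 by (simp add: g_def D_def dvd_imp_degree_le)
  have degG1: "degree G1 = degree G - g"
    using D0 G0 unfolding G1 g_def by (subst degree_mult_eq) auto
  assume "subres_coeff F G (degree (gcd F G)) (degree (gcd F G)) = 0"
  then obtain U V where UV: "U \<noteq> 0 \<or> V \<noteq> 0" "U = 0 \<or> degree U < degree G - g"
      and high: "\<And>i. g \<le> i \<Longrightarrow> coeff (U * F + V * G) i = 0"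
    using subres_coeff_zero_imp_combination[OF gG GF] unfolding g_def D_def by metis
  have "U * F + V * G = 0"
  proof (rule ccontr)
    assume W0: "U * F + V * G \<noteq> 0"
    have "D dvd U * F + V * G" by (simp add: F1 G1)
    then have "g \<le> degree (U * F + V * G)" using W0 by (simp add: g_def dvd_imp_degree_le)
    then show False using high W0 by (metis leading_coeff_0_iff)
  qed
  then have "D * (U * F1 + V * G1) = 0" by (simp add: F1 G1 algebra_simps)
  then have "U * F1 = - (V * G1)" using D0 by (simp add: eq_neg_iff_add_eq_0)
  then have "G1 dvd U * F1" by simp
  then have "G1 dvd U" using cop by (simp add: coprime_dvd_mult_left_iff coprime_commute)
  then have "U = 0" using UV(2) degG1 by (auto dest: dvd_imp_degree_le)
  then show False using UV(1) \<open>U * F + V * G = 0\<close> G0 by simp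
qed

lemma (in comm_ring_hom) subres_coeff_map_poly:
  assumes "degree (map_poly hom F) = degree F" "degree (map_poly hom G) = degree G"
  shows "hom (subres_coeff F G k j) = subres_coeff (map_poly hom F) (map_poly hom G) k j"
proof -
  let ?n = "degree F + degree G - 2 * k"
  have "map_mat hom (mat ?n ?n (\<lambda>(r, c). subres_matrix F G k r (if c = 0 then j else k + c))) =
      mat ?n ?n (\<lambda>(r, c). subres_matrix (map_poly hom F) (map_poly hom G) k r (if c = 0 then j else k + c))"
    by (rule eq_matI) (auto simp: subres_matrix_def assms coeff_map_poly)
  then show ?thesis
    unfolding subres_coeff_def Let_def assms by (metis hom_det)
qed

text \<open>When \<open>deg F = deg G + 1\<close>, the last subresultant coefficient \<open>sr\<^sub>q\<^sub>,\<^sub>q\<close> is the leading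
  coefficient of \<open>G\<close> (the matrix \<open>M\<^sub>q\<close> is \<open>1 \<times> 1\<close>).\<close>

lemma subres_coeff_last:
  fixes F G :: "'a::comm_ring_1 poly"
  assumes "degree F = degree G + 1"
  shows "subres_coeff F G (degree G) (degree G) = lead_coeff G"
  using assms by (simp add: subres_coeff_def det_single subres_matrix_def)

lemma first_nonzero_subres_gcd:
  fixes F G :: "'a::{factorial_ring_gcd,semiring_gcd_mult_normalize} poly"
  assumes GF: "degree G < degree F" and G0: "G \<noteq> 0" and k: "k \<le> degree G"
    and below: "\<And>j. j < k \<Longrightarrow> subres_coeff F G j j = 0" and at: "subres_coeff F G k k \<noteq> 0"
  shows "degree (gcd F G) = k" "\<exists>c. subres_poly F G k = smult c (gcd F G)"
proof -
  define S where "S = subres_poly F G k"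
  have "k \<le> degree (gcd F G)"
    using below subres_coeff_gcd_degree_nonzero[OF GF G0] not_less by blast
  moreover have degS: "degree S = k"
  proof (rule antisym)
    show "degree S \<le> k" by (simp add: S_def degree_subres_poly_le)
    show "k \<le> degree S" using at by (intro le_degree) (simp add: S_def coeff_subres_poly)
  qed
  moreover have dvd: "gcd F G dvd S"
    unfolding S_def by (rule subres_poly_dvd[OF k GF]) simp_all
  moreover have "S \<noteq> 0" using at by (auto simp: S_def poly_eq_iff coeff_subres_poly)
  ultimately show deg_gcd: "degree (gcd F G) = k"
    using dvd_imp_degree_le by (metis le_antisym)
  obtain t where t: "S = gcd F G * t" using dvd by (elim dvdE)
  have "degree t = 0"
    using \<open>S \<noteq> 0\<close> degS deg_gcd by (auto simp: t degree_mult_eq)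
  then obtain c where "t = [:c:]" by (elim degree_eq_zeroE)
  then show "\<exists>c. subres_poly F G k = smult c (gcd F G)"
    using t by (auto simp: S_def)
qed

text \<open>A squarefree polynomial with unit leading coefficient is coprime to its derivative: a common
  prime factor would divide its own derivative, hence be constant, hence divide the leading coefficient.\<close>

lemma coprime_pderiv_if_squarefree:
  fixes f :: "'a::{factorial_ring_gcd,semiring_gcd_mult_normalize,ring_char_0} poly"
  assumes sf: "squarefree f" and lc: "is_unit (lead_coeff f)"
  shows "coprime f (pderiv f)"
proof (rule ccontr)
  assume "\<not> coprime f (pderiv f)"
  then obtain c where c: "c dvd f" "c dvd pderiv f" "\<not> is_unit c" by (rule not_coprimeE)
  have "c \<noteq> 0" using c lc by auto
  then obtain p where "p dvd c" and p: "prime p" using prime_divisor_exists c(3) by blast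
  then have pf: "p dvd f" and pf': "p dvd pderiv f" using c dvd_trans by blast+
  from pf obtain h where h: "f = p * h" by (elim dvdE)
  have "pderiv f = pderiv p * h + p * pderiv h" unfolding h by (simp add: pderiv_mult)
  with pf' have "p dvd pderiv p * h" by (metis dvd_add_times_triv_right_iff mult.commute)
  then have "p dvd pderiv p \<or> p dvd h" using p by (simp add: prime_dvd_mult_iff)
  then show False
  proof
    assume "p dvd h"
    then have "p ^ 2 dvd f" unfolding h by (simp add: power2_eq_square)
    then have "is_unit p" using sf by (rule squarefreeD[rotated])
    then show False using p by simp
  next
    assume pp: "p dvd pderiv p"
    have "degree p = 0"
    proof (rule ccontr)
      assume deg: "degree p \<noteq> 0"
      then have "pderiv p \<noteq> 0" by (simp add: pderiv_eq_0_iff)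
      then have "degree p \<le> degree (pderiv p)" using pp by (simp add: dvd_imp_degree_le)
      then show False using deg by (simp add: degree_pderiv)
    qed
    then obtain a where a: "p = [:a:]" by (elim degree_eq_zeroE)
    have "a dvd lead_coeff f" using pf unfolding a const_poly_dvd_iff by blast
    then have "is_unit p" using lc by (simp add: a is_unit_const_poly_iff dvd_unit_imp_unit)
    then show False using p by simp
  qed
qed

lemma rsquarefree_dvd:
  fixes p q :: "'a::idom poly"
  assumes "rsquarefree q" "p dvd q"
  shows "rsquarefree p"
  using assms dvd_imp_order_le[of q p] unfolding rsquarefree_def
  by (metis dvd_0_left le_Suc_eq le_zero_eq One_nat_def)

lemma rsquarefree_dvd_if_roots:
  fixes R S :: "complex poly"
  assumes R: "rsquarefree R" and roots: "\<And>z. poly R z = 0 \<Longrightarrow> poly S z = 0"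
  shows "R dvd S"
proof -
  have "(\<Prod>z\<in>Z. [:-z, 1:]) dvd S" if "Z \<subseteq> {z. poly R z = 0}" "finite Z" for Z
    using that(2,1)
  proof (induction Z rule: finite_induct)
    case (insert x Z)
    then obtain T where T: "S = (\<Prod>z\<in>Z. [:-z, 1:]) * T" by (auto elim: dvdE)
    have "poly (\<Prod>z\<in>Z. [:-z, 1:]) x \<noteq> 0" using insert(1,2) by (auto simp: poly_prod prod_zero_iff)
    moreover have "poly S x = 0" using insert(4) roots by auto
    ultimately have "[:-x, 1:] dvd T" by (simp add: T dvd_iff_poly_eq_0)
    then have "[:-x, 1:] * (\<Prod>z\<in>Z. [:-z, 1:]) dvd S"
      unfolding T by (metis mult.commute mult_dvd_mono dvd_refl)
    then show ?case using insert(1,2) by simp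
  qed simp
  moreover have "finite {z. poly R z = 0}" using R by (simp add: rsquarefree_def poly_roots_finite)
  ultimately have "(\<Prod>z | poly R z = 0. [:-z, 1:]) dvd S" by blast
  then show ?thesis
    by (subst complex_poly_decompose_rsquarefree[OF R, symmetric]) (use R in \<open>simp add: smult_dvd_iff rsquarefree_def\<close>)
qed

lemma single_root_power:
  fixes D :: "complex poly"
  assumes roots: "\<And>z. poly D z = 0 \<Longrightarrow> z = \<beta>"
  shows "D = smult (lead_coeff D) ([:-\<beta>, 1:] ^ degree D)"
proof -
  have "{z. poly D z = 0} \<subseteq> {\<beta>}" using roots by blast
  then have "(\<Prod>z|poly D z = 0. [:-z, 1:] ^ order z D) = [:-\<beta>, 1:] ^ order \<beta> D"
    by (auto simp: subset_singleton_iff order_0I)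
  then have D: "D = smult (lead_coeff D) ([:-\<beta>, 1:] ^ order \<beta> D)"
    using complex_poly_decompose[of D] by simp
  show ?thesis
  proof (cases "D = 0")
    case False
    then have "degree D = order \<beta> D"
      by (subst D) (simp add: degree_linear_power)
    then show ?thesis using D by simp
  qed simp
qed

lemma squarefree_part_roots:
  fixes P :: "'a::{field_char_0,field_gcd} poly"
  assumes P0: "P \<noteq> 0"
  shows "rsquarefree (P div gcd P (pderiv P))" "poly (P div gcd P (pderiv P)) z = 0 \<longleftrightarrow> poly P z = 0"
proof -
  have "rsquarefree (P div gcd P (pderiv P)) \<and> (\<forall>z. poly (P div gcd P (pderiv P)) z = 0 \<longleftrightarrow> poly P z = 0)"
  proof (cases "pderiv P = 0")
    case True
    define Q where "Q = P div gcd P (pderiv P)"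
    have "P = Q * gcd P (pderiv P)" by (simp add: Q_def)
    then have "Q \<noteq> 0" "Q dvd P" using P0 by (auto intro: dvdI[of _ _ "gcd P (pderiv P)"])
    moreover have "degree P = 0" using True P0 pderiv_iszero by force
    ultimately obtain c d where "Q = [:c:]" "c \<noteq> 0" "P = [:d:]" "d \<noteq> 0"
      using P0 by (metis dvd_imp_degree_le le_zero_eq pCons_0_0 degree_eq_zeroE)
    then have "rsquarefree Q \<and> (\<forall>z. poly Q z = 0 \<longleftrightarrow> poly P z = 0)"
      by (simp add: rsquarefree_def order_0I)
    then show ?thesis by (simp add: Q_def)
  next
    case False
    show ?thesis
    proof (rule poly_squarefree_decomp[OF False])
      show "P = P div gcd P (pderiv P) * gcd P (pderiv P)" by simp
      show "pderiv P = pderiv P div gcd P (pderiv P) * gcd P (pderiv P)" by simp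
      show "gcd P (pderiv P) = fst (bezout_coefficients P (pderiv P)) * P +
          snd (bezout_coefficients P (pderiv P)) * pderiv P"
        by (simp add: bezout_coefficients_fst_snd)
    qed
  qed
  then show "rsquarefree (P div gcd P (pderiv P))" "poly (P div gcd P (pderiv P)) z = 0 \<longleftrightarrow> poly P z = 0"
    by blast+
qed

lemma coeff_linear_power_binomial:
  fixes b :: "'a::comm_semiring_1"
  shows "coeff ([:b, 1:] ^ k) i = of_nat (k choose i) * b ^ (k - i)"
proof (cases "i \<le> k")
  case True
  then show ?thesis by (simp add: coeff_linear_poly_power)
next
  case False
  then show ?thesis by (simp add: coeff_eq_0 degree_linear_power binomial_eq_0)
qed

lemma choose_absorb_step: "(k - i) * (k choose i) = (i + 1) * (k choose (i + 1))"
  using binomial_absorb_comp[of k i] binomial_absorption[of i k] by simp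

text \<open>The coefficient relations of the theorem characterise the constant multiples of \<open>(T + b)\<^sup>k\<close>
  among the polynomials of degree \<open>k\<close>: read from \<open>i = k - 1\<close> downwards, the relation for \<open>i\<close>
  determines \<open>s\<^sub>i\<close> from \<open>s\<^sub>i\<^sub>+\<^sub>1\<close> and forces \<open>s\<^sub>k\<^sub>-\<^sub>j = s\<^sub>k (k choose j) b\<^sup>j\<close> with \<open>b = s\<^sub>k\<^sub>-\<^sub>1 / (k s\<^sub>k)\<close>.\<close>

lemma power_of_linear_iff_coeff_relation:
  fixes S :: "'a::field_char_0 poly"
  assumes degS: "degree S = k" and k: "0 < k"
  shows "(\<exists>c b. S = smult c ([:b, 1:] ^ k)) \<longleftrightarrow>
    (\<forall>i<k. of_nat (k * (k - i)) * coeff S i * coeff S k =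
           of_nat (i + 1) * coeff S (k - 1) * coeff S (i + 1))"
proof
  assume "\<exists>c b. S = smult c ([:b, 1:] ^ k)"
  then obtain c b where S: "S = smult c ([:b, 1:] ^ k)" by blast
  show "\<forall>i<k. of_nat (k * (k - i)) * coeff S i * coeff S k =
           of_nat (i + 1) * coeff S (k - 1) * coeff S (i + 1)"
  proof (intro allI impI)
    fix i assume i: "i < k"
    have ch: "of_nat (k - i) * (of_nat (k choose i) :: 'a) = of_nat (i + 1) * of_nat (k choose (i + 1))"
      by (metis choose_absorb_step of_nat_mult)
    have pow: "b ^ (k - i) = b * b ^ (k - (i + 1))"
      using i by (simp add: Suc_diff_Suc flip: power_Suc)
    have cS: "coeff S i = c * of_nat (k choose i) * b ^ (k - i)"
      "coeff S (i + 1) = c * of_nat (k choose (i + 1)) * b ^ (k - (i + 1))"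
      "coeff S k = c" "coeff S (k - 1) = c * of_nat k * b"
      using k binomial_symmetric[of 1 k] by (simp_all add: S coeff_linear_power_binomial)
    have "of_nat (k * (k - i)) * coeff S i * coeff S k =
        (of_nat k * c * c * b * b ^ (k - (i + 1))) * (of_nat (k - i) * of_nat (k choose i))"
      by (simp only: cS pow of_nat_mult mult_ac)
    also have "\<dots> = (of_nat k * c * c * b * b ^ (k - (i + 1))) * (of_nat (i + 1) * of_nat (k choose (i + 1)))"
      by (simp only: ch)
    also have "\<dots> = of_nat (i + 1) * coeff S (k - 1) * coeff S (i + 1)"
      by (simp only: cS mult_ac)
    finally show "of_nat (k * (k - i)) * coeff S i * coeff S k =
           of_nat (i + 1) * coeff S (k - 1) * coeff S (i + 1)" .
  qed
next
  assume rel: "\<forall>i<k. of_nat (k * (k - i)) * coeff S i * coeff S k =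
           of_nat (i + 1) * coeff S (k - 1) * coeff S (i + 1)"
  define s where "s = coeff S"
  define b where "b = s (k - 1) / (of_nat k * s k)"
  have sk: "s k \<noteq> 0" using degS k by (auto simp: s_def)
  have ksk: "of_nat k * s k \<noteq> 0" using k sk by simp
  have skm1: "s (k - 1) = of_nat k * s k * b" unfolding b_def using ksk by simp
  have top_down: "s (k - j) = s k * of_nat (k choose (k - j)) * b ^ j" if "j \<le> k" for j
    using that
  proof (induction j)
    case (Suc j)
    define i where "i = k - Suc j"
    have i: "i < k" "k - j = i + 1" "k - Suc j = i" using Suc.prems unfolding i_def by auto
    have IH: "s (i + 1) = s k * of_nat (k choose (i + 1)) * b ^ j" using Suc i by simp
    have ch: "of_nat (i + 1) * (of_nat (k choose (i + 1)) :: 'a) = of_nat (k - i) * of_nat (k choose i)"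
      by (metis choose_absorb_step of_nat_mult)
    have "(of_nat k * s k) * (of_nat (k - i) * s i) = of_nat (k * (k - i)) * s i * s k"
      by (simp only: of_nat_mult mult_ac)
    also have "\<dots> = of_nat (i + 1) * s (k - 1) * s (i + 1)"
      using rel i(1) by (simp add: s_def)
    also have "\<dots> = (of_nat k * s k) * (of_nat (i + 1) * s (i + 1) * b)"
      by (simp only: skm1 mult_ac)
    finally have "of_nat (k - i) * s i = of_nat (i + 1) * s (i + 1) * b"
      using ksk by simp
    also have "\<dots> = s k * b ^ Suc j * (of_nat (i + 1) * of_nat (k choose (i + 1)))"
      by (simp only: IH power_Suc mult_ac)
    also have "\<dots> = of_nat (k - i) * (s k * of_nat (k choose i) * b ^ Suc j)"
      by (simp only: ch mult_ac)
    finally have "s i = s k * of_nat (k choose i) * b ^ Suc j"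
      using i(1) by simp
    then show ?case
      using binomial_symmetric[of i k] i by simp
  qed simp
  have "S = smult (s k) ([:b, 1:] ^ k)"
  proof (rule poly_eqI)
    fix n
    show "coeff S n = coeff (smult (s k) ([:b, 1:] ^ k)) n"
    proof (cases "n \<le> k")
      case True
      then show ?thesis
        using top_down[of "k - n"]
        by (simp add: s_def coeff_linear_power_binomial binomial_symmetric[OF True, symmetric])
    next
      case False
      then show ?thesis using degS by (simp add: coeff_eq_0 coeff_linear_power_binomial binomial_eq_0)
    qed
  qed
  then show "\<exists>c b. S = smult c ([:b, 1:] ^ k)" by blast
qed

definition ev :: "complex \<Rightarrow> rat poly \<Rightarrow> complex" where
  "ev \<alpha> c = poly (map_poly of_rat c) \<alpha>"

interpretation of_rat_field: field_hom' "of_rat :: rat \<Rightarrow> complex" ..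
interpretation of_rat_poly: map_poly_idom_hom "of_rat :: rat \<Rightarrow> complex" ..

interpretation ev: idom_hom "ev \<alpha>" for \<alpha>
  by unfold_locales (simp_all add: ev_def hom_distribs)

lemma ev_dvd_root: "p dvd q \<Longrightarrow> ev \<alpha> p = 0 \<Longrightarrow> ev \<alpha> q = 0"
  by (elim dvdE) (simp add: ev.hom_mult)

lemma ev_gcd_root: "ev \<alpha> p = 0 \<Longrightarrow> ev \<alpha> q = 0 \<Longrightarrow> ev \<alpha> (gcd p q) = 0"
  by (simp add: bezout_coefficients_fst_snd[of p q, symmetric] ev.hom_add ev.hom_mult)

lemma rat_poly_dvd_if_complex_roots:
  fixes R S :: "rat poly"
  assumes "rsquarefree (map_poly (of_rat :: rat \<Rightarrow> complex) R)" and "\<And>\<alpha>. ev \<alpha> R = 0 \<Longrightarrow> ev \<alpha> S = 0"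
  shows "R dvd S"
proof -
  have "map_poly (of_rat :: rat \<Rightarrow> complex) R dvd map_poly of_rat S"
    by (rule rsquarefree_dvd_if_roots) (use assms in \<open>auto simp: ev_def\<close>)
  then show ?thesis by (rule of_rat_hom.dvd_map_poly_hom_imp_dvd)
qed

lemma Phi_antimono: "j \<le> i \<Longrightarrow> Phi f i dvd Phi f j"
proof (induction i)
  case (Suc i)
  then show ?case
    using le_Suc_eq by (auto intro: dvd_trans[OF gcd_dvd1])
qed simp

lemma Phi_dvd_sr: "j \<le> i \<Longrightarrow> Phi f i dvd sr f j j"
proof -
  assume "j \<le> i"
  moreover have "Phi f j dvd sr f j j"
  proof (cases j)
    case 0
    have "sr f 0 0 = gcd (sr f 0 0) (pderiv (sr f 0 0)) * Phi f 0"
      by simp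
    then show ?thesis using 0 by (metis dvd_triv_right)
  qed simp
  ultimately show ?thesis using Phi_antimono dvd_trans by blast
qed

lemma Phi_Gamma: "1 \<le> k \<Longrightarrow> Phi f (k - 1) = Gamma f k * Phi f k"
  using Phi_antimono[of "k - 1" k f] by (simp add: Gamma_def)

definition sr_relation :: "rat poly poly \<Rightarrow> nat \<Rightarrow> nat \<Rightarrow> rat poly" where
  "sr_relation f k i =
     of_nat (k * (k - i)) * sr f k i * sr f k k - of_nat (i + 1) * sr f k (k - 1) * sr f k (i + 1)"

locale squarefree_curve =
  fixes f :: "rat poly poly"
  assumes squarefree: "squarefree f" and degree_ge_2: "degree f \<ge> 2"
    and lead_const: "degree (lead_coeff f) = 0" and lead_nonzero: "lead_coeff f \<noteq> 0"
begin

text \<open>The fibre \<open>F\<^sub>\<alpha> = f(\<alpha>, Y) \<in> \<complex>[Y]\<close>; since the leading coefficient of \<open>f\<close> is a nonzero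
  constant, \<open>F\<^sub>\<alpha>\<close> has degree \<open>d\<close> and \<open>F\<^sub>\<alpha>'\<close> has degree \<open>d - 1\<close> for every \<open>\<alpha>\<close>.\<close>

definition fibre :: "complex \<Rightarrow> complex poly" where
  "fibre \<alpha> = map_poly (ev \<alpha>) f"

lemma map_poly_ev_pderiv: "map_poly (ev \<alpha>) (pderiv f) = pderiv (fibre \<alpha>)"
  by (simp add: fibre_def ev.map_poly_pderiv)

lemma eval2_fibre:
  "eval2 f \<alpha> \<beta> = poly (fibre \<alpha>) \<beta>" "eval2 (pderiv f) \<alpha> \<beta> = poly (pderiv (fibre \<alpha>)) \<beta>"
  unfolding map_poly_ev_pderiv[symmetric] by (simp_all add: eval2_def fibre_def ev_def[abs_def])

lemma lead_coeff_f: obtains c where "lead_coeff f = [:c:]" "c \<noteq> 0"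
  using lead_const lead_nonzero by (metis degree_eq_zeroE pCons_0_0)

lemma degree_fibre: "degree (fibre \<alpha>) = degree f"
proof -
  obtain c where "lead_coeff f = [:c:]" "c \<noteq> 0" by (rule lead_coeff_f)
  then have "ev \<alpha> (lead_coeff f) \<noteq> 0" by (simp add: ev_def)
  then show ?thesis unfolding fibre_def by (intro Ring_Hom_Poly.degree_map_poly) auto
qed

lemma degree_pderiv_fibre: "degree (pderiv (fibre \<alpha>)) = degree f - 1"
  by (simp add: degree_pderiv degree_fibre)

lemma pderiv_fibre_nonzero: "pderiv (fibre \<alpha>) \<noteq> 0"
  using degree_pderiv_fibre[of \<alpha>] degree_ge_2 by auto

text \<open>Specialising \<open>X\<close> to \<open>\<alpha>\<close> commutes with taking subresultants, since it preserves the degrees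
  of \<open>f\<close> and \<open>\<partial>\<^sub>Y f\<close>.\<close>

lemma sr_at: "ev \<alpha> (sr f k j) = subres_coeff (fibre \<alpha>) (pderiv (fibre \<alpha>)) k j"
proof -
  have "degree (map_poly (ev \<alpha>) f) = degree f" "degree (map_poly (ev \<alpha>) (pderiv f)) = degree (pderiv f)"
    using degree_fibre degree_pderiv_fibre by (simp_all add: fibre_def map_poly_ev_pderiv degree_pderiv)
  then show ?thesis
    unfolding sr_def by (simp add: ev.subres_coeff_map_poly map_poly_ev_pderiv fibre_def)
qed

definition Sr :: "complex \<Rightarrow> nat \<Rightarrow> complex poly" where
  "Sr \<alpha> k = subres_poly (fibre \<alpha>) (pderiv (fibre \<alpha>)) k"

lemma coeff_Sr: "i \<le> k \<Longrightarrow> coeff (Sr \<alpha> k) i = ev \<alpha> (sr f k i)"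
  by (simp add: Sr_def coeff_subres_poly sr_at)

lemma ev_sr_relation:
  assumes "i < k"
  shows "ev \<alpha> (sr_relation f k i) = of_nat (k * (k - i)) * coeff (Sr \<alpha> k) i * coeff (Sr \<alpha> k) k
    - of_nat (i + 1) * coeff (Sr \<alpha> k) (k - 1) * coeff (Sr \<alpha> k) (i + 1)"
  unfolding sr_relation_def ev.hom_mult ev.hom_minus ev.hom_of_nat
  using assms by (simp add: coeff_Sr)

lemma resultant_nonzero: "sr f 0 0 \<noteq> 0"
proof -
  obtain c where "lead_coeff f = [:c:]" "c \<noteq> 0" by (rule lead_coeff_f)
  then have "coprime f (pderiv f)"
    by (intro coprime_pderiv_if_squarefree squarefree) (simp add: is_unit_const_poly_iff)
  moreover have "pderiv f \<noteq> 0" "degree (pderiv f) < degree f"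
    using degree_ge_2 by (auto simp: degree_pderiv pderiv_eq_0_iff)
  ultimately show ?thesis
    using subres_coeff_gcd_degree_nonzero[of "pderiv f" f] by (simp add: sr_def)
qed

lemma Phi0_roots:
  shows "rsquarefree (map_poly (of_rat :: rat \<Rightarrow> complex) (Phi f 0))"
    and "ev \<alpha> (Phi f 0) = 0 \<longleftrightarrow> ev \<alpha> (sr f 0 0) = 0"
proof -
  define P where "P = map_poly (of_rat :: rat \<Rightarrow> complex) (sr f 0 0)"
  have image: "map_poly of_rat (Phi f 0) = P div gcd P (pderiv P)"
    by (simp add: P_def of_rat_hom.map_poly_div of_rat_field.map_poly_gcd of_rat_hom.map_poly_pderiv)
  have "P \<noteq> 0" using resultant_nonzero by (simp add: P_def)
  from squarefree_part_roots[OF this, folded image] show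
    "rsquarefree (map_poly (of_rat :: rat \<Rightarrow> complex) (Phi f 0))"
    "ev \<alpha> (Phi f 0) = 0 \<longleftrightarrow> ev \<alpha> (sr f 0 0) = 0"
    by (simp_all add: ev_def P_def del: Phi.simps)
qed

lemma rsquarefree_Phi: "rsquarefree (map_poly (of_rat :: rat \<Rightarrow> complex) (Phi f i))"
  using Phi0_roots(1) Phi_antimono[of 0 i f] by (blast intro: rsquarefree_dvd of_rat_poly.hom_dvd)

lemma Phi_nonzero: "Phi f i \<noteq> 0"
  using rsquarefree_Phi[of i] by (auto simp: rsquarefree_def)

lemma Gamma_root_iff:
  assumes k: "1 \<le> k"
  shows "ev \<alpha> (Gamma f k) = 0 \<longleftrightarrow> ev \<alpha> (Phi f (k - 1)) = 0 \<and> ev \<alpha> (Phi f k) \<noteq> 0"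
proof
  let ?c = "map_poly (of_rat :: rat \<Rightarrow> complex)"
  have prod: "?c (Phi f (k - 1)) = ?c (Gamma f k) * ?c (Phi f k)"
    unfolding Phi_Gamma[OF k] by (rule of_rat_poly.hom_mult)
  assume root: "ev \<alpha> (Gamma f k) = 0"
  have nz: "?c (Gamma f k) * ?c (Phi f k) \<noteq> 0"
    using Phi_nonzero[of "k - 1"] by (simp flip: prod)
  have "order \<alpha> (?c (Phi f (k - 1))) = order \<alpha> (?c (Gamma f k)) + order \<alpha> (?c (Phi f k))"
    unfolding prod using nz by (rule order_mult)
  moreover have "order \<alpha> (?c (Phi f (k - 1))) \<le> 1"
    using rsquarefree_Phi[of "k - 1"] unfolding rsquarefree_def by (metis le_refl zero_le)
  moreover have "order \<alpha> (?c (Gamma f k)) \<noteq> 0"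
    using root nz by (simp add: ev_def order_root)
  ultimately have "order \<alpha> (?c (Phi f k)) = 0" by linarith
  then have "ev \<alpha> (Phi f k) \<noteq> 0"
    using nz by (simp add: ev_def order_root)
  moreover have "ev \<alpha> (Phi f (k - 1)) = 0"
    unfolding Phi_Gamma[OF k] ev.hom_mult using root by simp
  ultimately show "ev \<alpha> (Phi f (k - 1)) = 0 \<and> ev \<alpha> (Phi f k) \<noteq> 0" by simp
next
  assume "ev \<alpha> (Phi f (k - 1)) = 0 \<and> ev \<alpha> (Phi f k) \<noteq> 0"
  then show "ev \<alpha> (Gamma f k) = 0"
    unfolding Phi_Gamma[OF k] ev.hom_mult by auto
qed

lemma rsquarefree_Gamma:
  assumes "1 \<le> k"
  shows "rsquarefree (map_poly (of_rat :: rat \<Rightarrow> complex) (Gamma f k))"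
  using rsquarefree_Phi[of "k - 1"] Phi_Gamma[OF assms]
  by (metis dvd_triv_left of_rat_poly.hom_dvd rsquarefree_dvd)

lemma principal_coeffs_at_Gamma_root:
  assumes k: "1 \<le> k" and root: "ev \<alpha> (Gamma f k) = 0"
  shows "ev \<alpha> (sr f k k) \<noteq> 0" and "\<And>j. j < k \<Longrightarrow> ev \<alpha> (sr f j j) = 0"
proof -
  have Phi: "ev \<alpha> (Phi f (k - 1)) = 0" "ev \<alpha> (Phi f k) \<noteq> 0"
    using root Gamma_root_iff[OF k] by auto
  have "Phi f k = gcd (Phi f (k - 1)) (sr f k k)"
    using k by (cases k) auto
  then show "ev \<alpha> (sr f k k) \<noteq> 0"
    using Phi ev_gcd_root by metis
  show "ev \<alpha> (sr f j j) = 0" if "j < k" for j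
  proof -
    have "Phi f (k - 1) dvd sr f j j" using that by (intro Phi_dvd_sr) simp
    then show ?thesis using Phi(1) ev_dvd_root by blast
  qed
qed

lemma degree_Sr_at_Gamma_root:
  assumes "1 \<le> k" and "ev \<alpha> (Gamma f k) = 0"
  shows "degree (Sr \<alpha> k) = k"
proof (rule antisym)
  show "degree (Sr \<alpha> k) \<le> k" by (simp add: Sr_def degree_subres_poly_le)
  show "k \<le> degree (Sr \<alpha> k)"
    using principal_coeffs_at_Gamma_root(1)[OF assms] by (intro le_degree) (simp add: coeff_Sr)
qed

text \<open>Every root of the resultant is a root of some \<open>\<Gamma>\<^sub>k\<close>: the chain \<open>\<Phi>\<^sub>0, \<Phi>\<^sub>1, \<dots>\<close> ends with a
  divisor of \<open>sr\<^sub>d\<^sub>-\<^sub>1\<^sub>,\<^sub>d\<^sub>-\<^sub>1\<close>, which is a nonzero multiple of the constant leading coefficient of \<open>f\<close>.\<close>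

lemma Gamma_root_exists:
  assumes root: "ev \<alpha> (Phi f 0) = 0"
  obtains k where "1 \<le> k" "k \<le> degree f - 1" "ev \<alpha> (Gamma f k) = 0"
proof -
  define d where "d = degree f - 1"
  have "ev \<alpha> (sr f d d) = lead_coeff (pderiv (fibre \<alpha>))"
    using degree_ge_2 subres_coeff_last[of "fibre \<alpha>" "pderiv (fibre \<alpha>)"]
    by (simp add: sr_at d_def degree_fibre degree_pderiv_fibre)
  then have "ev \<alpha> (sr f d d) \<noteq> 0" using pderiv_fibre_nonzero by simp
  then have last: "ev \<alpha> (Phi f d) \<noteq> 0"
    using Phi_dvd_sr[of d d f] ev_dvd_root by blast
  define k where "k = (LEAST k. ev \<alpha> (Phi f k) \<noteq> 0)"
  have Pk: "ev \<alpha> (Phi f k) \<noteq> 0"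
    unfolding k_def by (rule LeastI[where k = d]) (rule last)
  have kd: "k \<le> d"
    unfolding k_def by (rule Least_le) (rule last)
  have k1: "1 \<le> k" using Pk root by (cases k) auto
  have "k - 1 < k" using k1 by simp
  then have "ev \<alpha> (Phi f (k - 1)) = 0"
    unfolding k_def by (rule not_less_Least[where P = "\<lambda>k. ev \<alpha> (Phi f k) \<noteq> 0", simplified])
  with Pk k1 kd show ?thesis
    using that Gamma_root_iff by (simp add: d_def)
qed

text \<open>Under generic position, at a root \<open>\<alpha>\<close> of \<open>\<Gamma>\<^sub>k\<close> the subresultant \<open>Sr\<^sub>k(\<alpha>, Y)\<close> is a constant
  multiple of \<open>gcd(f(\<alpha>, Y), \<partial>\<^sub>Y f(\<alpha>, Y))\<close>, a polynomial of degree \<open>k\<close> with a single root, hence a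
  constant multiple of a \<open>k\<close>-th power of a linear polynomial.\<close>

lemma Sr_power_at_Gamma_root:
  assumes gp: "generic_position_x f" and k: "1 \<le> k" "k \<le> degree f - 1"
    and root: "ev \<alpha> (Gamma f k) = 0"
  shows "\<exists>c b. Sr \<alpha> k = smult c ([:b, 1:] ^ k)"
proof -
  define F where "F = fibre \<alpha>"
  define D where "D = gcd F (pderiv F)"
  have GF: "degree (pderiv F) < degree F" and G0: "pderiv F \<noteq> 0" and kG: "k \<le> degree (pderiv F)"
    using degree_ge_2 k pderiv_fibre_nonzero
    by (simp_all add: F_def degree_fibre degree_pderiv_fibre)
  note coeffs = principal_coeffs_at_Gamma_root[OF k(1) root, unfolded sr_at, folded F_def]
  obtain c where degD: "degree D = k" and Sr: "Sr \<alpha> k = smult c D"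
    using first_nonzero_subres_gcd[OF GF G0 kG coeffs(2) coeffs(1)]
    by (auto simp: D_def Sr_def F_def)
  have "\<exists>\<beta>. \<forall>z. poly D z = 0 \<longrightarrow> z = \<beta>"
  proof -
    have "poly F z = 0 \<and> poly (pderiv F) z = 0" if "poly D z = 0" for z
      using that by (auto simp: D_def poly_eq_0_iff_dvd dvd_trans)
    then show ?thesis
      using gp unfolding generic_position_x_def eval2_fibre F_def by metis
  qed
  then obtain \<beta> where "\<And>z. poly D z = 0 \<Longrightarrow> z = \<beta>" by blast
  then have "D = smult (lead_coeff D) ([:-\<beta>, 1:] ^ k)"
    using single_root_power degD by metis
  then have "Sr \<alpha> k = smult (c * lead_coeff D) ([:-\<beta>, 1:] ^ k)"
    unfolding Sr by (metis smult_smult)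
  then show ?thesis by blast
qed

lemma Gamma_dvd_sr_relation:
  assumes gp: "generic_position_x f" and k: "1 \<le> k" "k \<le> degree f - 1" and i: "i < k"
  shows "Gamma f k dvd sr_relation f k i"
proof (rule rat_poly_dvd_if_complex_roots[OF rsquarefree_Gamma[OF k(1)]])
  fix \<alpha> assume root: "ev \<alpha> (Gamma f k) = 0"
  have "\<exists>c b. Sr \<alpha> k = smult c ([:b, 1:] ^ k)"
    by (rule Sr_power_at_Gamma_root[OF gp k root])
  then show "ev \<alpha> (sr_relation f k i) = 0"
    using power_of_linear_iff_coeff_relation[OF degree_Sr_at_Gamma_root[OF k(1) root]] k i
    by (simp add: ev_sr_relation)
qed

text \<open>Second direction: if \<open>\<Gamma>\<^sub>k\<close> divides the relations, then at every \<open>\<alpha>\<close> where the fibre has a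
  multiple root, \<open>Sr\<^sub>k(\<alpha>, Y)\<close> is a nonzero multiple of \<open>(Y + b)\<^sup>k\<close> for the appropriate \<open>k\<close>, and every
  common root of \<open>f(\<alpha>, Y)\<close> and \<open>\<partial>\<^sub>Y f(\<alpha>, Y)\<close> is a root of it, hence equal to \<open>-b\<close>.\<close>

lemma generic_position_if_Gamma_dvd:
  assumes dvd: "\<And>k i. 1 \<le> k \<Longrightarrow> k \<le> degree f - 1 \<Longrightarrow> i < k \<Longrightarrow> Gamma f k dvd sr_relation f k i"
  shows "generic_position_x f"
  unfolding generic_position_x_def eval2_fibre
proof (intro allI impI, elim conjE)
  fix \<alpha> \<beta>1 \<beta>2
  define F where "F = fibre \<alpha>"
  have GF: "degree (pderiv F) < degree F"
    using degree_ge_2 by (simp add: F_def degree_fibre degree_pderiv_fibre)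
  assume "poly (fibre \<alpha>) \<beta>1 = 0" "poly (pderiv (fibre \<alpha>)) \<beta>1 = 0"
    "poly (fibre \<alpha>) \<beta>2 = 0" "poly (pderiv (fibre \<alpha>)) \<beta>2 = 0"
  then have common: "[:-\<beta>, 1:] dvd F \<and> [:-\<beta>, 1:] dvd pderiv F" if "\<beta> \<in> {\<beta>1, \<beta>2}" for \<beta>
    using that by (auto simp: F_def poly_eq_0_iff_dvd)
  have "[:-\<beta>1, 1:] dvd Sr \<alpha> 0"
    unfolding Sr_def F_def[symmetric] using common[of \<beta>1] GF by (intro subres_poly_dvd) auto
  then have "ev \<alpha> (sr f 0 0) = 0"
    by (simp add: Sr_def subres_poly_def sr_at poly_monom poly_eq_0_iff_dvd[symmetric])
  then obtain k where k: "1 \<le> k" "k \<le> degree f - 1" and root: "ev \<alpha> (Gamma f k) = 0"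
    using Phi0_roots(2) Gamma_root_exists by blast
  have degSr: "degree (Sr \<alpha> k) = k"
    by (rule degree_Sr_at_Gamma_root[OF k(1) root])
  have "ev \<alpha> (sr_relation f k i) = 0" if "i < k" for i
    using dvd[OF k that] root ev_dvd_root by blast
  then obtain c b where Sr: "Sr \<alpha> k = smult c ([:b, 1:] ^ k)"
    using power_of_linear_iff_coeff_relation[OF degSr] k by (auto simp: ev_sr_relation)
  have "c \<noteq> 0" using degSr k by (auto simp: Sr)
  have "\<beta> = - b" if "\<beta> \<in> {\<beta>1, \<beta>2}" for \<beta>
  proof -
    have "[:-\<beta>, 1:] dvd Sr \<alpha> k"
      unfolding Sr_def F_def[symmetric] using common[OF that] GF k
      by (intro subres_poly_dvd) (auto simp: F_def degree_pderiv_fibre)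
    then have "c * (\<beta> + b) ^ k = 0"
      by (simp add: Sr poly_eq_0_iff_dvd[symmetric] add.commute)
    then show ?thesis using \<open>c \<noteq> 0\<close> by (simp add: eq_neg_iff_add_eq_0)
  qed
  then show "\<beta>1 = \<beta>2" by blast
qed

end

theorem theorem3:
  fixes f :: "rat poly poly"
  assumes "squarefree f"
    and "degree f \<ge> 2"
    and "degree (lead_coeff f) = 0" and "lead_coeff f \<noteq> 0"
  shows "generic_position_x f \<longleftrightarrow>
    (\<forall>k \<in> {1..degree f - 1}. \<forall>i < k.
       Gamma f k dvd
         (of_nat (k * (k - i)) * sr f k i * sr f k k
          - of_nat (i + 1) * sr f k (k - 1) * sr f k (i + 1)))"
proof -
  interpret squarefree_curve f
    using assms by unfold_locales
  show ?thesis
    unfolding sr_relation_def[symmetric]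
    using Gamma_dvd_sr_relation generic_position_if_Gamma_dvd by auto
qed

end
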